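(* Let $n\geq 3$ and $m\geq 3$ be integers and $Q(z)=\sum_{i=0}^{m}\binom{m}{i}\frac{(-1)^{i}}{n+m+1-i} z^{n+m+1-i}$, $P(z)=Q(z)+1$. Then $Q(1)$ is not an integer. In particular, $P(1)\neq -1$. *)

theory Defs
  imports Complex_Main
begin

definition Qpoly :: "nat \<Rightarrow> nat \<Rightarrow> complex \<Rightarrow> complex" where
  "Qpoly n m z = (\<Sum>i=0..m. of_nat (m choose i) * (-1) ^ i / of_nat (n + m + 1 - i) * z ^ (n + m + 1 - i))"

definition Ppoly :: "nat \<Rightarrow> nat \<Rightarrow> complex \<Rightarrow> complex" where
  "Ppoly n m z = Qpoly n m z + 1"

end

theory Submission imports Defs begin

text \<open>Reversing the order of summation turns \<open>Q(1)\<close> into \<open>\<plusminus>\<Sum>\<^sub>j (m choose j) (-1)\<^sup>j / (n+1+j)\<close>,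
  which by the partial-fraction expansion of \<open>m! / (a (a+1) \<dots> (a+m))\<close> equals
  \<open>\<plusminus>m! / ((n+1) (n+2) \<dots> (n+m+1))\<close>. This is a fraction strictly between \<open>0\<close> and \<open>1\<close>
  in absolute value, hence not an integer; in particular \<open>Q(1) \<noteq> -2\<close>.\<close>

lemma sum_binomial_Suc:
  fixes f :: "nat \<Rightarrow> 'a::comm_semiring_1"
  shows "(\<Sum>j\<le>Suc m. of_nat (Suc m choose j) * f j)
       = (\<Sum>j\<le>m. of_nat (m choose j) * (f j + f (Suc j)))"
proof -
  have "(\<Sum>j\<le>Suc m. of_nat (Suc m choose j) * f j)
      = (\<Sum>j\<le>m. of_nat (m choose j) * f (Suc j) + of_nat (m choose Suc j) * f (Suc j)) + f 0"
    by (subst sum.atMost_Suc_shift) (simp add: algebra_simps)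
  also have "\<dots> = (\<Sum>j\<le>m. of_nat (m choose j) * f (Suc j))
                 + ((\<Sum>j\<le>m. of_nat (m choose Suc j) * f (Suc j)) + f 0)"
    by (simp add: sum.distrib add.assoc)
  also have "(\<Sum>j\<le>m. of_nat (m choose Suc j) * f (Suc j)) + f 0
           = (\<Sum>j\<le>Suc m. of_nat (m choose j) * f j)"
    by (subst sum.atMost_Suc_shift) (simp add: add.commute)
  also have "\<dots> = (\<Sum>j\<le>m. of_nat (m choose j) * f j)"
    by (simp add: binomial_eq_0)
  finally show ?thesis
    by (simp add: sum.distrib algebra_simps)
qed

lemma sum_alternating_binomial_divide:
  fixes a :: "'a::field_char_0"
  assumes "pochhammer a (Suc m) \<noteq> 0"
  shows "(\<Sum>j\<le>m. of_nat (m choose j) * (-1) ^ j / (a + of_nat j)) = fact m / pochhammer a (Suc m)"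
  using assms
proof (induction m arbitrary: a)
  case 0
  then show ?case by simp
next
  case (Suc m)
  let ?P = "pochhammer a (Suc (Suc m))"
  have a: "a \<noteq> 0" and am: "a + of_nat (Suc m) \<noteq> 0"
    using Suc.prems by (auto simp: pochhammer_eq_0_iff eq_neg_iff_add_eq_0)
  have P_a: "pochhammer a (Suc m) = ?P / (a + of_nat (Suc m))"
    using am by (simp add: pochhammer_Suc)
  have P_a1: "pochhammer (a + 1) (Suc m) = ?P / a"
    using a by (simp add: pochhammer_rec)
  have "pochhammer a (Suc m) \<noteq> 0" "pochhammer (a + 1) (Suc m) \<noteq> 0"
    using Suc.prems a am by (simp_all add: P_a P_a1)
  note IH = this[THEN Suc.IH]
  have "(\<Sum>j\<le>Suc m. of_nat (Suc m choose j) * (-1) ^ j / (a + of_nat j))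
      = (\<Sum>j\<le>m. of_nat (m choose j) * ((-1) ^ j / (a + of_nat j) + (-1) ^ Suc j / (a + of_nat (Suc j))))"
    using sum_binomial_Suc[of m "\<lambda>j. (-1) ^ j / (a + of_nat j)"]
    by (simp only: times_divide_eq_right)
  also have "\<dots> = (\<Sum>j\<le>m. of_nat (m choose j) * (-1) ^ j / (a + of_nat j))
        - (\<Sum>j\<le>m. of_nat (m choose j) * (-1) ^ j / (a + 1 + of_nat j))"
    by (simp add: sum_subtractf[symmetric] algebra_simps)
  also have "\<dots> = fact m / pochhammer a (Suc m) - fact m / pochhammer (a + 1) (Suc m)"
    by (simp only: IH)
  also have "\<dots> = fact (Suc m) / ?P"
    unfolding P_a P_a1 using Suc.prems a am by (simp add: field_simps)
  finally show ?case .
qed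

lemma Qpoly_one:
  "Qpoly n m 1 = (-1) ^ m * of_nat (fact m) / of_nat (pochhammer (Suc n) (Suc m))"
proof -
  have "Qpoly n m 1 = (\<Sum>j\<le>m. of_nat (m choose j) * (-1) ^ (m - j) / of_nat (Suc n + j))"
    unfolding Qpoly_def
    by (subst sum.atLeastAtMost_rev)
       (auto simp: atLeast0AtMost binomial_symmetric[symmetric] intro!: sum.cong)
  also have "\<dots> = (-1) ^ m * (\<Sum>j\<le>m. of_nat (m choose j) * (-1) ^ j / (of_nat (Suc n) + of_nat j))"
    by (simp add: sum_distrib_left neg_one_power_add_eq_neg_one_power_diff[symmetric]
        power_add algebra_simps)
  also have "\<dots> = (-1) ^ m * (fact m / pochhammer (of_nat (Suc n)) (Suc m))"
  proof -
    have nz: "pochhammer (of_nat (Suc n) :: complex) (Suc m) \<noteq> 0"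
      using pochhammer_pos[of "Suc n" "Suc m"] by (simp only: pochhammer_of_nat) simp
    show ?thesis
      by (simp only: sum_alternating_binomial_divide[OF nz])
  qed
  finally show ?thesis
    by (simp only: pochhammer_of_nat of_nat_fact times_divide_eq_right)
qed

lemma fact_less_pochhammer_Suc:
  assumes "0 < n"
  shows "fact m < pochhammer (Suc n) (Suc m)"
proof (induction m)
  case 0
  then show ?case using assms by simp
next
  case (Suc m)
  have "fact (Suc m) = Suc m * fact m" by simp
  also have "\<dots> < Suc m * pochhammer (Suc n) (Suc m)"
    using Suc.IH by (intro mult_strict_left_mono) auto
  also have "\<dots> \<le> (Suc n + Suc m) * pochhammer (Suc n) (Suc m)"
    by (intro mult_right_mono) auto
  finally show ?case
    by (simp add: pochhammer_Suc mult.commute)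
qed

lemma of_nat_divide_not_Ints:
  assumes "0 < p" "p < q"
  shows "(of_nat p / of_nat q :: 'a::field_char_0) \<notin> \<int>"
proof
  assume "(of_nat p / of_nat q :: 'a) \<in> \<int>"
  then obtain k where "(of_nat p / of_nat q :: 'a) = of_int k"
    by (auto elim: Ints_cases)
  then have "(of_int (int p) :: 'a) = of_int (k * int q)"
    using assms by (simp add: field_simps)
  then have "int q dvd int p"
    by (simp only: of_int_eq_iff) simp
  then show False
    using assms by (auto dest: zdvd_imp_le)
qed

theorem lemma2p4:
  fixes n m :: nat
  assumes "n \<ge> 3" and "m \<ge> 3"
  shows "Qpoly n m 1 \<notin> \<int> \<and> Ppoly n m 1 \<noteq> -1"
proof -
  have frac: "(of_nat (fact m) / of_nat (pochhammer (Suc n) (Suc m)) :: complex) \<notin> \<int>"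
    using assms by (intro of_nat_divide_not_Ints fact_less_pochhammer_Suc) auto
  have Q: "Qpoly n m 1 \<notin> \<int>"
  proof
    assume "Qpoly n m 1 \<in> \<int>"
    then have "(-1) ^ m * Qpoly n m 1 \<in> \<int>" by simp
    with frac show False
      by (simp add: Qpoly_one)
  qed
  moreover have "Ppoly n m 1 \<noteq> -1"
  proof
    assume "Ppoly n m 1 = -1"
    then have "Qpoly n m 1 = -2"
      unfolding Ppoly_def by (simp add: eq_neg_iff_add_eq_0 add.commute)
    with Q show False by simp
  qed
  ultimately show ?thesis ..
qed

end
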